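(* Let $A$ be a two-dimensional evolution algebra over a field $\mathbb{K}$ with $\dim(A^2)=1$, $A^3\neq0$ and $(A^2)^2=0$. Then there is a natural basis $\{e,f\}$ of $A$ with $e^2=e-f$ and $f^2=-e+f$. The square of $A$ is $\mathfrak{D}_5$, and $A$ is not alternative.
   Context: An evolution algebra over $\mathbb{K}$ is a $\mathbb{K}$-algebra with a basis $\{e_i\}$ (natural basis) such that $e_ie_j=0$ for $i\neq j$. $A^2$ is the span of $\{xy: x,y\in A\}$, $A^3$ the span of $\{xy: x\in A,y\in A^2\}$, $(A^2)^2$ the span of $\{xy:x,y\in A^2\}$. For a natural basis $\{e_1,e_2\}$ with $e_1^2=\omega_{11}e_1+\omega_{21}e_2$, $e_2^2=\omega_{12}e_1+\omega_{22}e_2$, its pseudo-square is $\{L,T,R,D\}$-subset with $L,T,R,D$ present iff $\omega_{11},\omega_{12},\omega_{22},\omega_{21}$ respectively are nonzero; the square of $A$ is the set of pseudo-squares of all natural bases; $\mathfrak{D}_5=\{\{L,T,R,D\}\}$. $A$ is alternative if $x^2y=x(xy)$ and $yx^2=(yx)x$ for all $x,y\in A$. *)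

theory Defs
  imports Complex_Main
begin

definition bilinear_mult :: "('k::field \<Rightarrow> 'a::ab_group_add \<Rightarrow> 'a) \<Rightarrow> ('a \<Rightarrow> 'a \<Rightarrow> 'a) \<Rightarrow> bool" where
  "bilinear_mult sc mult \<longleftrightarrow>
     (\<forall>x y z. mult (x + y) z = mult x z + mult y z) \<and>
     (\<forall>x y z. mult x (y + z) = mult x y + mult x z) \<and>
     (\<forall>c x y. mult (sc c x) y = sc c (mult x y)) \<and>
     (\<forall>c x y. mult x (sc c y) = sc c (mult x y))"

definition natural_basis2 :: "('k::field \<Rightarrow> 'a::ab_group_add \<Rightarrow> 'a) \<Rightarrow> ('a \<Rightarrow> 'a \<Rightarrow> 'a) \<Rightarrow> 'a \<Rightarrow> 'a \<Rightarrow> bool" where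
  "natural_basis2 sc mult e f \<longleftrightarrow>
     e \<noteq> f \<and> \<not> module.dependent sc {e, f} \<and> module.span sc {e, f} = UNIV \<and>
     mult e f = 0 \<and> mult f e = 0"

definition evolution_algebra2 :: "('k::field \<Rightarrow> 'a::ab_group_add \<Rightarrow> 'a) \<Rightarrow> ('a \<Rightarrow> 'a \<Rightarrow> 'a) \<Rightarrow> bool" where
  "evolution_algebra2 sc mult \<longleftrightarrow>
     vector_space sc \<and> bilinear_mult sc mult \<and> vector_space.dim sc (UNIV :: 'a set) = 2 \<and>
     (\<exists>e f. natural_basis2 sc mult e f)"

definition alg_sq :: "('k::field \<Rightarrow> 'a::ab_group_add \<Rightarrow> 'a) \<Rightarrow> ('a \<Rightarrow> 'a \<Rightarrow> 'a) \<Rightarrow> 'a set" where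
  "alg_sq sc mult = module.span sc {mult x y | x y. True}"

definition alg_cube :: "('k::field \<Rightarrow> 'a::ab_group_add \<Rightarrow> 'a) \<Rightarrow> ('a \<Rightarrow> 'a \<Rightarrow> 'a) \<Rightarrow> 'a set" where
  "alg_cube sc mult = module.span sc {mult x y | x y. y \<in> alg_sq sc mult}"

definition alg_sq_sq :: "('k::field \<Rightarrow> 'a::ab_group_add \<Rightarrow> 'a) \<Rightarrow> ('a \<Rightarrow> 'a \<Rightarrow> 'a) \<Rightarrow> 'a set" where
  "alg_sq_sq sc mult = module.span sc {mult x y | x y. x \<in> alg_sq sc mult \<and> y \<in> alg_sq sc mult}"

datatype letter = L | T | R | D

text \<open>Pseudo-square of the natural basis (e1,e2) = (e,f):
  e^2 = w11 e + w21 f, f^2 = w12 e + w22 f;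
  L iff w11 \<noteq> 0, T iff w12 \<noteq> 0, R iff w22 \<noteq> 0, D iff w21 \<noteq> 0.\<close>

definition pseudo_square :: "('k::field \<Rightarrow> 'a::ab_group_add \<Rightarrow> 'a) \<Rightarrow> ('a \<Rightarrow> 'a \<Rightarrow> 'a) \<Rightarrow> 'a \<Rightarrow> 'a \<Rightarrow> letter set" where
  "pseudo_square sc mult e f =
     {s. case s of
          L \<Rightarrow> module.representation sc {e, f} (mult e e) e \<noteq> 0
        | T \<Rightarrow> module.representation sc {e, f} (mult f f) e \<noteq> 0
        | R \<Rightarrow> module.representation sc {e, f} (mult f f) f \<noteq> 0
        | D \<Rightarrow> module.representation sc {e, f} (mult e e) f \<noteq> 0}"

definition square_of :: "('k::field \<Rightarrow> 'a::ab_group_add \<Rightarrow> 'a) \<Rightarrow> ('a \<Rightarrow> 'a \<Rightarrow> 'a) \<Rightarrow> letter set set" where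
  "square_of sc mult = {pseudo_square sc mult e f | e f. natural_basis2 sc mult e f}"

definition frakD5 :: "letter set set" where
  "frakD5 = {{L, T, R, D}}"

definition alternative_alg :: "('a \<Rightarrow> 'a \<Rightarrow> 'a) \<Rightarrow> bool" where
  "alternative_alg mult \<longleftrightarrow>
     (\<forall>x y. mult (mult x x) y = mult x (mult x y) \<and> mult y (mult x x) = mult (mult y x) x)"

end

theory Submission
  imports Defs
begin

text \<open>Write \<open>e\<^sup>2 = a e + b f\<close> and \<open>f\<^sup>2 = c e + d f\<close> in a natural basis. Since \<open>e\<^sup>2, f\<^sup>2 \<in> A\<^sup>2\<close>,
  the condition \<open>(A\<^sup>2)\<^sup>2 = 0\<close> gives \<open>(e\<^sup>2)\<^sup>2 = (f\<^sup>2)\<^sup>2 = 0\<close>, i.e. \<open>a\<^sup>3 + b\<^sup>2c = a\<^sup>2b + b\<^sup>2d = 0\<close> and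
  \<open>c\<^sup>2a + d\<^sup>2c = c\<^sup>2b + d\<^sup>3 = 0\<close>. As \<open>A\<^sup>3\<close> is spanned by \<open>e e\<^sup>2 = a e\<^sup>2\<close>, \<open>f e\<^sup>2 = b f\<^sup>2\<close>,
  \<open>e f\<^sup>2 = c e\<^sup>2\<close> and \<open>f f\<^sup>2 = d f\<^sup>2\<close>, the condition \<open>A\<^sup>3 \<noteq> 0\<close> forces \<open>a \<noteq> 0\<close>, \<open>d \<noteq> 0\<close> or \<open>bc \<noteq> 0\<close>,
  and then the cubic relations force all four coefficients to be nonzero. So every natural
  basis has pseudo-square \<open>{L,T,R,D}\<close>; rescaling to \<open>e/a\<close> and \<open>-bf/a\<^sup>2\<close> gives the normal form,
  and \<open>(e\<^sup>2)f = b f\<^sup>2 \<noteq> 0 = e(ef)\<close> shows that \<open>A\<close> is not alternative.\<close>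

lemma cubic_relations_nonzero:
  fixes a b c d :: "'k::idom"
  assumes "a^3 + b^2 * c = 0" and "c^2 * b + d^3 = 0"
    and "a \<noteq> 0 \<or> d \<noteq> 0 \<or> (b \<noteq> 0 \<and> c \<noteq> 0)"
  shows "a \<noteq> 0" "b \<noteq> 0" "c \<noteq> 0" "d \<noteq> 0"
proof -
  show a: "a \<noteq> 0"
  proof
    assume "a = 0"
    with assms(1) have "b = 0 \<or> c = 0" by simp
    with assms(2) have "d = 0" by auto
    with \<open>a = 0\<close> \<open>b = 0 \<or> c = 0\<close> assms(3) show False by auto
  qed
  show d: "d \<noteq> 0"
  proof
    assume "d = 0"
    with assms(2) have "b = 0 \<or> c = 0" by auto
    with assms(1) a show False by auto
  qed
  show "b \<noteq> 0" using assms(1) a by auto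
  show "c \<noteq> 0" using assms(2) d by auto
qed

locale evolution_basis = vector_space sc for sc :: "'k::field \<Rightarrow> 'a::ab_group_add \<Rightarrow> 'a" +
  fixes mult :: "'a \<Rightarrow> 'a \<Rightarrow> 'a" and e f :: 'a
  assumes bilinear: "bilinear_mult sc mult" and natural: "natural_basis2 sc mult e f"
begin

lemma basis_neq: "e \<noteq> f" and basis_independent: "independent {e, f}"
  and basis_span: "span {e, f} = UNIV"
  and mult_e_f: "mult e f = 0" and mult_f_e: "mult f e = 0"
  using natural unfolding natural_basis2_def by auto

lemma mult_add_left: "mult (x + y) z = mult x z + mult y z"
  and mult_add_right: "mult x (y + z) = mult x y + mult x z"
  and mult_scale_left: "mult (sc c x) y = sc c (mult x y)"
  and mult_scale_right: "mult x (sc c y) = sc c (mult x y)"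
  using bilinear unfolding bilinear_mult_def by auto

lemma mult_zero_right: "mult x 0 = 0"
  using mult_scale_right[of x 0 0] by simp

lemma obtain_coordinates:
  obtains p q where "x = sc p e + sc q f"
proof -
  have "x \<in> span {e, f}" using basis_span by simp
  then obtain u where "x = (\<Sum>v\<in>{e, f}. sc (u v) v)" using span_finite[of "{e, f}"] by auto
  then show ?thesis using basis_neq that by auto
qed

lemma coordinates_eq_0_iff: "sc p e + sc q f = 0 \<longleftrightarrow> p = 0 \<and> q = 0"
proof
  assume sum: "sc p e + sc q f = 0"
  show "p = 0 \<and> q = 0"
  proof (rule ccontr)
    assume "\<not> (p = 0 \<and> q = 0)"
    then have "\<exists>v\<in>{e, f}. (if v = e then p else q) \<noteq> 0" using basis_neq by auto
    moreover have "(\<Sum>v\<in>{e, f}. sc (if v = e then p else q) v) = 0" using sum basis_neq by auto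
    ultimately have "dependent {e, f}"
      by (intro dependent_finite[THEN iffD2] exI[of _ "\<lambda>v. if v = e then p else q"]) auto
    then show False using basis_independent by simp
  qed
qed auto

lemma coordinates_eq_iff: "sc p e + sc q f = sc p' e + sc q' f \<longleftrightarrow> p = p' \<and> q = q'"
proof -
  have "sc p e + sc q f = sc p' e + sc q' f \<longleftrightarrow> sc (p - p') e + sc (q - q') f = 0"
    by (auto simp: scale_left_diff_distrib algebra_simps)
  then show ?thesis by (simp add: coordinates_eq_0_iff)
qed

lemma representation_coordinates:
  "representation {e, f} (sc p e + sc q f) e = p"
  "representation {e, f} (sc p e + sc q f) f = q"
proof -
  have s: "v \<in> span {e, f}" for v using basis_span by simp
  have "representation {e, f} (sc p e + sc q f) =
      (\<lambda>b. p * representation {e, f} e b + q * representation {e, f} f b)"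
    by (simp add: representation_add[OF basis_independent s s]
        representation_scale[OF basis_independent s])
  then show "representation {e, f} (sc p e + sc q f) e = p"
    "representation {e, f} (sc p e + sc q f) f = q"
    using representation_basis[OF basis_independent] basis_neq by auto
qed

lemma mult_coordinates:
  "mult (sc p e + sc q f) (sc r e + sc s f) = sc (p * r) (mult e e) + sc (q * s) (mult f f)"
  by (simp add: mult_add_left mult_add_right mult_scale_left mult_scale_right mult_e_f mult_f_e
      mult.commute)

lemma scale_coordinates: "sc x (sc p e + sc q f) = sc (x * p) e + sc (x * q) f"
  by (simp add: scale_right_distrib)

lemma mult_in_alg_sq: "mult x y \<in> alg_sq sc mult"
  unfolding alg_sq_def by (rule span_base) blast

lemma mult_alg_sq_eq_0:
  assumes "alg_sq_sq sc mult = {0}" and "x \<in> alg_sq sc mult" and "y \<in> alg_sq sc mult"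
  shows "mult x y = 0"
proof -
  have "mult x y \<in> alg_sq_sq sc mult"
    unfolding alg_sq_sq_def by (rule span_base) (use assms in blast)
  then show ?thesis using assms(1) by simp
qed

lemma alg_cube_eq_0_if_squares_annihilated:
  assumes "\<And>z. mult z (mult e e) = 0" and "\<And>z. mult z (mult f f) = 0"
  shows "alg_cube sc mult = {0}"
proof -
  let ?Ann = "{y. \<forall>z. mult z y = 0}"
  have "subspace ?Ann"
    unfolding subspace_def by (auto simp: mult_zero_right mult_add_right mult_scale_right)
  moreover have "{mult x y | x y. True} \<subseteq> ?Ann"
  proof clarify
    fix x y z
    obtain p q r s where x: "x = sc p e + sc q f" and y: "y = sc r e + sc s f"
      by (meson obtain_coordinates)
    show "mult z (mult x y) = 0"
      unfolding x y mult_coordinates by (simp add: mult_add_right mult_scale_right assms)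
  qed
  ultimately have "alg_sq sc mult \<subseteq> ?Ann" unfolding alg_sq_def by (rule span_minimal[rotated])
  then have "{mult x y | x y. y \<in> alg_sq sc mult} \<subseteq> {0}" by auto
  then have "alg_cube sc mult \<subseteq> {0}"
    unfolding alg_cube_def using span_minimal subspace_single_0 by blast
  then show ?thesis using span_zero[of "{mult x y | x y. y \<in> alg_sq sc mult}"]
    unfolding alg_cube_def by blast
qed

lemma structure_constants:
  assumes cube: "alg_cube sc mult \<noteq> {0}" and sq_sq: "alg_sq_sq sc mult = {0}"
    and ee: "mult e e = sc a e + sc b f" and ff: "mult f f = sc c e + sc d f"
  shows "a \<noteq> 0" "b \<noteq> 0" "c \<noteq> 0" "d \<noteq> 0"
    and "a^3 + b^2 * c = 0" and "a^2 + b * d = 0"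
proof -
  have "mult (mult e e) (mult e e) = 0" "mult (mult f f) (mult f f) = 0"
    by (simp_all add: mult_alg_sq_eq_0[OF sq_sq] mult_in_alg_sq)
  then have "sc (a * a) (sc a e + sc b f) + sc (b * b) (sc c e + sc d f) = 0"
    "sc (c * c) (sc a e + sc b f) + sc (d * d) (sc c e + sc d f) = 0"
    by (simp_all only: ee ff mult_coordinates)
  then have "sc (a * a * a + b * b * c) e + sc (a * a * b + b * b * d) f = 0"
    "sc (c * c * a + d * d * c) e + sc (c * c * b + d * d * d) f = 0"
    by (simp_all add: scale_coordinates algebra_simps)
  then have A: "a^3 + b^2 * c = 0" "a^2 * b + b^2 * d = 0" and B: "c^2 * b + d^3 = 0"
    unfolding coordinates_eq_0_iff by (simp_all add: power2_eq_square power3_eq_cube)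
  have cubes: "mult e (mult e e) = sc a (mult e e)" "mult f (mult e e) = sc b (mult f f)"
    "mult e (mult f f) = sc c (mult e e)" "mult f (mult f f) = sc d (mult f f)"
    by (simp_all add: ee ff mult_add_right mult_scale_right mult_e_f mult_f_e)
  have "a \<noteq> 0 \<or> d \<noteq> 0 \<or> (b \<noteq> 0 \<and> c \<noteq> 0)"
  proof (rule ccontr)
    assume "\<not> (a \<noteq> 0 \<or> d \<noteq> 0 \<or> (b \<noteq> 0 \<and> c \<noteq> 0))"
    then have basis_annihilates: "mult e (mult e e) = 0" "mult f (mult e e) = 0"
      "mult e (mult f f) = 0" "mult f (mult f f) = 0"
      unfolding cubes using ee ff by auto
    have "mult z (mult e e) = 0 \<and> mult z (mult f f) = 0" for z
    proof -
      obtain p q where "z = sc p e + sc q f" by (rule obtain_coordinates)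
      then show ?thesis by (simp add: mult_add_left mult_scale_left basis_annihilates)
    qed
    then have "alg_cube sc mult = {0}" by (simp add: alg_cube_eq_0_if_squares_annihilated)
    with cube show False ..
  qed
  then show nz: "a \<noteq> 0" "b \<noteq> 0" "c \<noteq> 0" "d \<noteq> 0"
    using cubic_relations_nonzero[OF A(1) B] by auto
  show "a^3 + b^2 * c = 0" by (fact A(1))
  have "b * (a^2 + b * d) = 0" using A(2) by (simp add: algebra_simps power2_eq_square)
  then show "a^2 + b * d = 0" using nz(2) by simp
qed

lemma pseudo_square_eq_LTRD:
  assumes "alg_cube sc mult \<noteq> {0}" and "alg_sq_sq sc mult = {0}"
  shows "pseudo_square sc mult e f = {L, T, R, D}"
proof -
  obtain a b c d where ee: "mult e e = sc a e + sc b f" and ff: "mult f f = sc c e + sc d f"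
    by (meson obtain_coordinates)
  note nonzero = structure_constants(1-4)[OF assms ee ff]
  show ?thesis
  proof (intro set_eqI)
    fix x show "x \<in> pseudo_square sc mult e f \<longleftrightarrow> x \<in> {L, T, R, D}"
      unfolding pseudo_square_def
      by (cases x) (simp_all add: ee ff representation_coordinates nonzero)
  qed
qed

lemma not_alternative:
  assumes "alg_cube sc mult \<noteq> {0}" and "alg_sq_sq sc mult = {0}"
  shows "\<not> alternative_alg mult"
proof
  assume alternative: "alternative_alg mult"
  obtain a b c d where ee: "mult e e = sc a e + sc b f" and ff: "mult f f = sc c e + sc d f"
    by (meson obtain_coordinates)
  note nonzero = structure_constants(1-4)[OF assms ee ff]
  have "mult (mult e e) f = sc b (mult f f)"
    unfolding ee by (simp add: mult_add_left mult_scale_left mult_e_f)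
  moreover have "mult f f \<noteq> 0" using ff nonzero by (simp add: coordinates_eq_0_iff)
  moreover have "mult (mult e e) f = mult e (mult e f)"
    using alternative unfolding alternative_alg_def by blast
  ultimately show False using nonzero by (simp add: mult_e_f mult_zero_right)
qed

lemma natural_basis2_scale:
  assumes p: "p \<noteq> 0" and q: "q \<noteq> 0"
  shows "natural_basis2 sc mult (sc p e) (sc q f)"
  unfolding natural_basis2_def
proof (intro conjI)
  show neq: "sc p e \<noteq> sc q f"
  proof
    assume "sc p e = sc q f"
    then have "sc p e + sc (- q) f = 0" by (simp add: scale_minus_left)
    then show False using coordinates_eq_0_iff p by blast
  qed
  show "\<not> dependent {sc p e, sc q f}"
  proof
    assume "dependent {sc p e, sc q f}"
    then obtain u where u: "\<exists>v\<in>{sc p e, sc q f}. u v \<noteq> 0"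
        "(\<Sum>v\<in>{sc p e, sc q f}. sc (u v) v) = 0"
      using dependent_finite[of "{sc p e, sc q f}"] by auto
    have "sc (u (sc p e) * p) e + sc (u (sc q f) * q) f = 0" using u(2) neq by simp
    then show False using coordinates_eq_0_iff u(1) p q by auto
  qed
  have "e = sc (1 / p) (sc p e)" "f = sc (1 / q) (sc q f)" using p q by simp_all
  then have "{e, f} \<subseteq> span {sc p e, sc q f}"
    by (metis empty_subsetI insert_subset span_base span_scale insertI1 insertI2)
  then have "span {e, f} \<subseteq> span {sc p e, sc q f}" by (rule span_minimal) (rule subspace_span)
  then show "span {sc p e, sc q f} = UNIV" using basis_span by auto
  show "mult (sc p e) (sc q f) = 0" by (simp add: mult_scale_left mult_scale_right mult_e_f)
  show "mult (sc q f) (sc p e) = 0" by (simp add: mult_scale_left mult_scale_right mult_f_e)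
qed

lemma normal_form:
  assumes "alg_cube sc mult \<noteq> {0}" and "alg_sq_sq sc mult = {0}"
  shows "\<exists>e' f'. natural_basis2 sc mult e' f' \<and> mult e' e' = e' - f' \<and> mult f' f' = - e' + f'"
proof -
  obtain a b c d where ee: "mult e e = sc a e + sc b f" and ff: "mult f f = sc c e + sc d f"
    by (meson obtain_coordinates)
  note constants = structure_constants[OF assms ee ff]
  define p where "p = 1 / a"
  define q where "q = - b / a^2"
  have "p \<noteq> 0" "q \<noteq> 0" using constants by (auto simp: p_def q_def)
  have "mult (sc p e) (sc p e) = sc (p * p * a) e + sc (p * p * b) f"
    by (simp add: mult_scale_left mult_scale_right ee scale_coordinates mult.assoc)
  also have "\<dots> = sc p e + sc (- q) f"
    unfolding coordinates_eq_iff using constants by (simp add: p_def q_def power2_eq_square)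
  finally have e': "mult (sc p e) (sc p e) = sc p e - sc q f" by (simp add: scale_minus_left)
  have "b^2 * c = - (a^3)" "b * d = - (a^2)"
    using constants(5,6) by (simp_all add: eq_neg_iff_add_eq_0 add.commute)
  then have "q * q * c = - p" "q * q * d = q"
    using constants(1) unfolding p_def q_def
    by (simp_all add: field_simps power2_eq_square power3_eq_cube)
  moreover have "mult (sc q f) (sc q f) = sc (q * q * c) e + sc (q * q * d) f"
    by (simp add: mult_scale_left mult_scale_right ff scale_coordinates mult.assoc)
  ultimately have f': "mult (sc q f) (sc q f) = - sc p e + sc q f" by (simp add: scale_minus_left)
  show ?thesis using natural_basis2_scale[OF \<open>p \<noteq> 0\<close> \<open>q \<noteq> 0\<close>] e' f' by blast
qed

end

lemma evolution_basisI:
  assumes "evolution_algebra2 sc mult" and "natural_basis2 sc mult e f"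
  shows "evolution_basis sc mult e f"
  using assms unfolding evolution_algebra2_def evolution_basis_def evolution_basis_axioms_def
  by blast

theorem proposition3p10:
  fixes sc :: "'k::field \<Rightarrow> 'a::ab_group_add \<Rightarrow> 'a"
    and mult :: "'a \<Rightarrow> 'a \<Rightarrow> 'a"
  assumes "evolution_algebra2 sc mult"
    and "vector_space.dim sc (alg_sq sc mult) = 1"
    and "alg_cube sc mult \<noteq> {0}"
    and "alg_sq_sq sc mult = {0}"
  shows "(\<exists>e f. natural_basis2 sc mult e f \<and> mult e e = e - f \<and> mult f f = - e + f)
         \<and> square_of sc mult = frakD5
         \<and> \<not> alternative_alg mult"
proof -
  obtain e f where basis: "evolution_basis sc mult e f"
    using assms(1) evolution_basisI unfolding evolution_algebra2_def by blast
  have "pseudo_square sc mult e' f' = {L, T, R, D}" if "natural_basis2 sc mult e' f'" for e' f'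
    using evolution_basis.pseudo_square_eq_LTRD[OF evolution_basisI[OF assms(1) that] assms(3,4)] .
  then have "square_of sc mult = frakD5"
    using evolution_basis.natural[OF basis] unfolding square_of_def frakD5_def by blast
  then show ?thesis
    using evolution_basis.normal_form[OF basis assms(3,4)]
      evolution_basis.not_alternative[OF basis assms(3,4)] by blast
qed

end
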